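(* Let $S>0$, let $I\ge 1$, let $N_1,\dots,N_I$ be positive integers and let $\theta_1>\theta_2>\dots>\theta_I>0$. Consider the complete price differentiation problem $$\max_{\{p_i>0,\ s_i\ge 0,\ n_i\}_{i=1}^I}\ \sum_{i=1}^I n_i p_i s_i\quad\text{s.t.}\quad s_i=\Big(\frac{\theta_i}{p_i}-1\Big)^+,\ \ n_i\in\{0,1,\dots,N_i\}\ (i=1,\dots,I),\quad \sum_{i=1}^I n_i s_i\le S,$$ where $(x)^+=\max(x,0)$. For $k\in\{1,\dots,I\}$ let $\lambda(k)=\Big(\frac{\sum_{i=1}^k N_i\sqrt{\theta_i}}{S+\sum_{i=1}^k N_i}\Big)^2$, let $K^{cp}=\max\{k\in\{1,\dots,I\}:\theta_k>\lambda(k)\}$ (this set contains $k=1$), and let $\lambda^*=\lambda(K^{cp})$. Then this problem has an optimal solution in which $n_i=N_i$ for all $i$, $$s_i=\sqrt{\theta_i/\lambda^*}-1,\ \ p_i=\sqrt{\theta_i\lambda^*}\quad\text{for } i=1,\dots,K^{cp},$$ and $s_i=0$, $p_i=\theta_i$ for $i=K^{cp}+1,\dots,I$.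
   Context: Each user of group $i$ has utility $\theta_i\ln(1+s)$ for $s$ units of resource; a user facing unit price $p_i$ demands the surplus-maximizing quantity $(\theta_i/p_i-1)^+$. The service provider with total resource $S$ chooses a price $p_i$ and a number $n_i$ of admitted users for each group $i$ to maximize revenue. *)

theory Defs
  imports Complex_Main
begin

definition pos_part :: "real \<Rightarrow> real" where
  "pos_part x = max x 0"

definition cp_feasible ::
  "nat \<Rightarrow> real \<Rightarrow> (nat \<Rightarrow> nat) \<Rightarrow> (nat \<Rightarrow> real) \<Rightarrow>
   (nat \<Rightarrow> real) \<Rightarrow> (nat \<Rightarrow> real) \<Rightarrow> (nat \<Rightarrow> nat) \<Rightarrow> bool" where
  "cp_feasible I S N \<theta> p s n \<longleftrightarrow>
     (\<forall>i\<in>{1..I}. p i > 0 \<and> s i \<ge> 0 \<and> s i = pos_part (\<theta> i / p i - 1) \<and> n i \<le> N i)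
     \<and> (\<Sum>i=1..I. real (n i) * s i) \<le> S"

definition cp_revenue ::
  "nat \<Rightarrow> (nat \<Rightarrow> real) \<Rightarrow> (nat \<Rightarrow> real) \<Rightarrow> (nat \<Rightarrow> nat) \<Rightarrow> real" where
  "cp_revenue I p s n = (\<Sum>i=1..I. real (n i) * p i * s i)"

definition cp_optimal ::
  "nat \<Rightarrow> real \<Rightarrow> (nat \<Rightarrow> nat) \<Rightarrow> (nat \<Rightarrow> real) \<Rightarrow>
   (nat \<Rightarrow> real) \<Rightarrow> (nat \<Rightarrow> real) \<Rightarrow> (nat \<Rightarrow> nat) \<Rightarrow> bool" where
  "cp_optimal I S N \<theta> p s n \<longleftrightarrow>
     cp_feasible I S N \<theta> p s n \<and>
     (\<forall>p' s' n'. cp_feasible I S N \<theta> p' s' n' \<longrightarrow> cp_revenue I p' s' n' \<le> cp_revenue I p s n)"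

definition cp_lambda :: "real \<Rightarrow> (nat \<Rightarrow> nat) \<Rightarrow> (nat \<Rightarrow> real) \<Rightarrow> nat \<Rightarrow> real" where
  "cp_lambda S N \<theta> k =
     ((\<Sum>i=1..k. real (N i) * sqrt (\<theta> i)) / (S + (\<Sum>i=1..k. real (N i)))) ^ 2"

definition K_cp :: "nat \<Rightarrow> real \<Rightarrow> (nat \<Rightarrow> nat) \<Rightarrow> (nat \<Rightarrow> real) \<Rightarrow> nat" where
  "K_cp I S N \<theta> = Max {k \<in> {1..I}. \<theta> k > cp_lambda S N \<theta> k}"

end

theory Submission imports Defs begin

text \<open>Lagrangian duality with shadow price \<open>\<lambda>\<^sup>* = m\<^sup>2\<close> for the resource. A user of type \<open>\<theta>\<close>
  facing price \<open>p\<close> pays \<open>p s\<close> and costs \<open>m\<^sup>2 s\<close>; maximising \<open>(p - m\<^sup>2) (\<theta>/p - 1)\<^sup>+\<close> over \<open>p\<close>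
  gives \<open>((\<surd>\<theta> - m)\<^sup>+)\<^sup>2\<close>, attained at \<open>p = m \<surd>\<theta>\<close>. Hence every feasible revenue is at most
  \<open>m\<^sup>2 S + \<Sum>\<^sub>i N\<^sub>i ((\<surd>\<theta>\<^sub>i - m)\<^sup>+)\<^sup>2\<close>, for every \<open>m\<close>. The prices of the theorem attain this bound
  as soon as they exhaust the resource, and the choice of \<open>K\<^sup>c\<^sup>p\<close> is exactly what makes
  \<open>m = \<surd>\<lambda>\<^sup>*\<close> separate the served groups (\<open>\<surd>\<theta>\<^sub>i > m\<close>) from the others (\<open>\<surd>\<theta>\<^sub>i \<le> m\<close>).\<close>

lemma price_mult_demand_le:
  fixes q t m :: real
  assumes "q > 0"
  shows "q * pos_part (t / q - 1) \<le> m\<^sup>2 * pos_part (t / q - 1) + (pos_part (sqrt t - m))\<^sup>2"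
proof (cases "t / q - 1 \<le> 0")
  case True
  then show ?thesis by (simp add: pos_part_def)
next
  case False
  then have s: "pos_part (t / q - 1) = t / q - 1" and "q < t"
    using assms by (auto simp: pos_part_def field_simps)
  then have "t > 0" using assms by simp
  show ?thesis
  proof (cases "sqrt t \<le> m")
    case True
    then have "t \<le> m\<^sup>2" by (rule sqrt_le_D)
    then have "q * (t / q - 1) \<le> m\<^sup>2 * (t / q - 1)"
      using \<open>q < t\<close> \<open>\<not> t / q - 1 \<le> 0\<close> by (intro mult_right_mono) auto
    then show ?thesis
      using True s by (simp add: pos_part_def)
  next
    case False
    have "sqrt t * sqrt t = t" using \<open>t > 0\<close> by simp
    then have "q * (m\<^sup>2 * (t / q - 1) + (sqrt t - m)\<^sup>2) - q * (q * (t / q - 1)) = (q - m * sqrt t)\<^sup>2"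
      using assms by (simp add: algebra_simps power2_eq_square)
    then have "q * (q * (t / q - 1)) \<le> q * (m\<^sup>2 * (t / q - 1) + (sqrt t - m)\<^sup>2)"
      by (metis diff_ge_0_iff_ge zero_le_power2)
    then show ?thesis
      using assms False s by (simp add: pos_part_def)
  qed
qed

lemma cp_revenue_le_dual_bound:
  assumes "cp_feasible I S N \<theta> p s n"
  shows "cp_revenue I p s n \<le> m\<^sup>2 * S + (\<Sum>i=1..I. real (N i) * (pos_part (sqrt (\<theta> i) - m))\<^sup>2)"
proof -
  have term_le: "real (n i) * p i * s i \<le> m\<^sup>2 * (real (n i) * s i) + real (N i) * (pos_part (sqrt (\<theta> i) - m))\<^sup>2"
    if i: "i \<in> {1..I}" for i
  proof -
    have "p i > 0" and s: "s i = pos_part (\<theta> i / p i - 1)" and "n i \<le> N i"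
      using assms i by (auto simp: cp_feasible_def)
    have "real (n i) * (p i * s i) \<le> real (n i) * (m\<^sup>2 * s i + (pos_part (sqrt (\<theta> i) - m))\<^sup>2)"
      using price_mult_demand_le[OF \<open>p i > 0\<close>] s by (intro mult_left_mono) auto
    moreover have "real (n i) * (pos_part (sqrt (\<theta> i) - m))\<^sup>2 \<le> real (N i) * (pos_part (sqrt (\<theta> i) - m))\<^sup>2"
      using \<open>n i \<le> N i\<close> by (intro mult_right_mono) auto
    ultimately show ?thesis by (simp add: algebra_simps)
  qed
  have "cp_revenue I p s n \<le> (\<Sum>i=1..I. m\<^sup>2 * (real (n i) * s i) + real (N i) * (pos_part (sqrt (\<theta> i) - m))\<^sup>2)"
    unfolding cp_revenue_def by (rule sum_mono) (rule term_le)
  also have "\<dots> = m\<^sup>2 * (\<Sum>i=1..I. real (n i) * s i) + (\<Sum>i=1..I. real (N i) * (pos_part (sqrt (\<theta> i) - m))\<^sup>2)"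
    by (simp add: sum.distrib sum_distrib_left)
  also have "\<dots> \<le> m\<^sup>2 * S + (\<Sum>i=1..I. real (N i) * (pos_part (sqrt (\<theta> i) - m))\<^sup>2)"
    using assms by (intro add_right_mono mult_left_mono) (auto simp: cp_feasible_def)
  finally show ?thesis .
qed

lemma sum_atLeastAtMost_if_le:
  fixes f :: "nat \<Rightarrow> 'a::comm_monoid_add"
  assumes "K \<le> I"
  shows "(\<Sum>i=1..I. if i \<le> K then f i else 0) = (\<Sum>i=1..K. f i)"
proof -
  have "{1..I} \<inter> {i. i \<le> K} = {1..K}" using assms by auto
  then show ?thesis by (simp add: sum.If_cases)
qed

lemma cp_optimal_threshold_prices:
  fixes m :: real
  assumes "m > 0" and "K \<le> I"
    and high: "\<forall>i\<in>{1..K}. m < sqrt (\<theta> i)"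
    and low: "\<forall>i\<in>{K<..I}. sqrt (\<theta> i) \<le> m"
    and pos: "\<forall>i\<in>{1..I}. \<theta> i > 0"
    and budget: "(\<Sum>i=1..K. real (N i) * (sqrt (\<theta> i) / m - 1)) = S"
  shows "cp_optimal I S N \<theta>
      (\<lambda>i. if i \<le> K then sqrt (\<theta> i) * m else \<theta> i)
      (\<lambda>i. if i \<le> K then sqrt (\<theta> i) / m - 1 else 0) N"
    (is "cp_optimal I S N \<theta> ?p ?s N")
proof -
  have demand: "?s i = pos_part (\<theta> i / ?p i - 1) \<and> ?s i \<ge> 0" if "i \<in> {1..I}" for i
  proof (cases "i \<le> K")
    case True
    then have "m < sqrt (\<theta> i)" using high that by simp
    have "sqrt (\<theta> i) * sqrt (\<theta> i) = \<theta> i" using pos that by (simp add: less_imp_le)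
    then have "\<theta> i / ?p i = (sqrt (\<theta> i) * sqrt (\<theta> i)) / (sqrt (\<theta> i) * m)"
      using True by simp
    also have "\<dots> = sqrt (\<theta> i) / m"
      using \<open>m < sqrt (\<theta> i)\<close> \<open>m > 0\<close> by (intro nonzero_mult_divide_mult_cancel_left) auto
    finally have "\<theta> i / ?p i = sqrt (\<theta> i) / m" .
    moreover have "1 < sqrt (\<theta> i) / m" using \<open>m < sqrt (\<theta> i)\<close> \<open>m > 0\<close> by simp
    ultimately show ?thesis using True by (simp add: pos_part_def)
  next
    case False
    then show ?thesis using pos that by (simp add: pos_part_def)
  qed
  have spent: "(\<Sum>i=1..I. real (N i) * ?s i) = S"
    using sum_atLeastAtMost_if_le[OF \<open>K \<le> I\<close>, of "\<lambda>i. real (N i) * (sqrt (\<theta> i) / m - 1)"] budget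
    by (simp add: if_distrib cong: if_cong)
  have feasible: "cp_feasible I S N \<theta> ?p ?s N"
    unfolding cp_feasible_def
  proof (intro conjI ballI)
    fix i assume "i \<in> {1..I}"
    then show "?p i > 0" and "N i \<le> N i" using pos \<open>m > 0\<close> by auto
    show "?s i \<ge> 0" and "?s i = pos_part (\<theta> i / ?p i - 1)" using demand[OF \<open>i \<in> {1..I}\<close>] by auto
  qed (use spent in simp)
  have attained: "real (N i) * ?p i * ?s i
      = m\<^sup>2 * (real (N i) * ?s i) + real (N i) * (pos_part (sqrt (\<theta> i) - m))\<^sup>2"
    if "i \<in> {1..I}" for i
  proof (cases "i \<le> K")
    case True
    have factor: "(r * m) * (r / m - 1) = m\<^sup>2 * (r / m - 1) + (r - m)\<^sup>2" for r
      using \<open>m > 0\<close> by (simp add: field_simps power2_eq_square)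
    have served: "pos_part (sqrt (\<theta> i) - m) = sqrt (\<theta> i) - m"
      using True high that by (simp add: pos_part_def)
    have "real (N i) * ?p i * ?s i = real (N i) * ((sqrt (\<theta> i) * m) * (sqrt (\<theta> i) / m - 1))"
      using True by simp
    also have "\<dots> = real (N i) * (m\<^sup>2 * (sqrt (\<theta> i) / m - 1) + (pos_part (sqrt (\<theta> i) - m))\<^sup>2)"
      unfolding factor served ..
    finally show ?thesis
      using True by (simp add: ring_distribs mult.left_commute)
  next
    case False
    then show ?thesis using low that by (simp add: pos_part_def)
  qed
  have "cp_revenue I ?p ?s N
      = (\<Sum>i=1..I. m\<^sup>2 * (real (N i) * ?s i) + real (N i) * (pos_part (sqrt (\<theta> i) - m))\<^sup>2)"
    unfolding cp_revenue_def by (rule sum.cong) (simp_all add: attained)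
  also have "\<dots> = m\<^sup>2 * S + (\<Sum>i=1..I. real (N i) * (pos_part (sqrt (\<theta> i) - m))\<^sup>2)"
    by (simp add: sum.distrib spent[symmetric] sum_distrib_left)
  finally show ?thesis
    using feasible cp_revenue_le_dual_bound unfolding cp_optimal_def by metis
qed

definition cp_level :: "real \<Rightarrow> (nat \<Rightarrow> nat) \<Rightarrow> (nat \<Rightarrow> real) \<Rightarrow> nat \<Rightarrow> real" where
  "cp_level S N \<theta> k = (\<Sum>i=1..k. real (N i) * sqrt (\<theta> i)) / (S + (\<Sum>i=1..k. real (N i)))"

lemma cp_lambda_eq_cp_level_sq: "cp_lambda S N \<theta> k = (cp_level S N \<theta> k)\<^sup>2"
  by (simp add: cp_lambda_def cp_level_def)

lemma cp_level_nonneg: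
  assumes "S > 0" and "\<forall>i\<in>{1..k}. \<theta> i \<ge> 0"
  shows "cp_level S N \<theta> k \<ge> 0"
  using assms unfolding cp_level_def
  by (intro divide_nonneg_pos sum_nonneg add_pos_nonneg) auto

lemma cp_level_pos:
  assumes "S > 0" and "1 \<le> k" and "N 1 > 0" and "\<theta> 1 > 0" and "\<forall>i\<in>{1..k}. \<theta> i \<ge> 0"
  shows "cp_level S N \<theta> k > 0"
proof -
  have "(\<Sum>i=1..k. real (N i) * sqrt (\<theta> i)) > 0"
    using assms by (intro sum_pos2[where i = 1]) auto
  then show ?thesis
    using assms unfolding cp_level_def by (intro divide_pos_pos add_pos_nonneg sum_nonneg) auto
qed

lemma cp_level_budget:
  assumes "S > 0" and "cp_level S N \<theta> k > 0"
  shows "(\<Sum>i=1..k. real (N i) * (sqrt (\<theta> i) / cp_level S N \<theta> k - 1)) = S"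
proof -
  define A where "A = (\<Sum>i=1..k. real (N i) * sqrt (\<theta> i))"
  define B where "B = (\<Sum>i=1..k. real (N i))"
  have level: "cp_level S N \<theta> k = A / (S + B)" by (simp add: cp_level_def A_def B_def)
  have "S + B > 0" using assms(1) unfolding B_def by (intro add_pos_nonneg sum_nonneg) auto
  moreover have "A \<noteq> 0" using assms(2) level by auto
  moreover have "(\<Sum>i=1..k. real (N i) * (sqrt (\<theta> i) / cp_level S N \<theta> k - 1))
      = A / cp_level S N \<theta> k - B"
    by (simp add: A_def B_def algebra_simps sum_subtractf sum_divide_distrib)
  ultimately show ?thesis by (simp add: level)
qed

text \<open>Adding group \<open>k + 1\<close> replaces the level by a mediant of the old level and \<open>\<surd>\<theta>\<^sub>k\<^sub>+\<^sub>1\<close>,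
  so the level of \<open>k + 1\<close> stays below \<open>\<surd>\<theta>\<^sub>k\<^sub>+\<^sub>1\<close> whenever the level of \<open>k\<close> is.\<close>
lemma sqrt_le_cp_level_if_cp_lambda_Suc_ge:
  assumes "S > 0" and "\<forall>i\<in>{1..Suc k}. \<theta> i \<ge> 0"
    and "\<theta> (Suc k) \<le> cp_lambda S N \<theta> (Suc k)"
  shows "sqrt (\<theta> (Suc k)) \<le> cp_level S N \<theta> k"
proof (rule ccontr)
  define x where "x = sqrt (\<theta> (Suc k))"
  define A where "A = (\<Sum>i=1..k. real (N i) * sqrt (\<theta> i))"
  define D where "D = S + (\<Sum>i=1..k. real (N i))"
  define n where "n = real (N (Suc k))"
  assume "\<not> x \<le> cp_level S N \<theta> k"
  moreover have "cp_level S N \<theta> k = A / D" by (simp add: cp_level_def A_def D_def)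
  moreover have "D > 0" using assms(1) unfolding D_def by (intro add_pos_nonneg sum_nonneg) auto
  ultimately have "A < x * D" by (simp add: field_simps)
  then have "(A + n * x) / (D + n) < x"
    using \<open>D > 0\<close> by (simp add: n_def field_simps)
  moreover have "cp_level S N \<theta> (Suc k) = (A + n * x) / (D + n)"
    by (simp add: cp_level_def A_def D_def n_def x_def add.assoc)
  ultimately have "cp_level S N \<theta> (Suc k) < x" by simp
  then have "cp_lambda S N \<theta> (Suc k) < x\<^sup>2"
    using cp_level_nonneg[OF assms(1,2)] by (simp add: cp_lambda_eq_cp_level_sq power_strict_mono)
  then show False using assms(2,3) by (simp add: x_def)
qed

lemma cp_lambda_1_less:
  assumes "S > 0" and "\<theta> 1 > 0"
  shows "cp_lambda S N \<theta> 1 < \<theta> 1"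
proof -
  have "cp_level S N \<theta> 1 < sqrt (\<theta> 1)"
    using assms by (simp add: cp_level_def field_simps)
  then have "(cp_level S N \<theta> 1)\<^sup>2 < (sqrt (\<theta> 1))\<^sup>2"
    using cp_level_nonneg[of S 1 \<theta> N] assms by (intro power_strict_mono) auto
  then show ?thesis using assms(2) by (simp add: cp_lambda_eq_cp_level_sq)
qed

lemma K_cp_mem:
  assumes "S > 0" and "I \<ge> 1" and "\<theta> 1 > 0"
  shows "K_cp I S N \<theta> \<in> {k \<in> {1..I}. \<theta> k > cp_lambda S N \<theta> k}"
  unfolding K_cp_def using assms cp_lambda_1_less by (intro Max_in) auto

lemma K_cp_maximal:
  assumes "K_cp I S N \<theta> < k" and "k \<le> I"
  shows "\<theta> k \<le> cp_lambda S N \<theta> k"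
proof (rule ccontr)
  assume "\<not> ?thesis"
  then have "k \<le> K_cp I S N \<theta>"
    using assms unfolding K_cp_def by (intro Max_ge) auto
  then show False using assms(1) by simp
qed

lemma K_cp_separates:
  fixes N :: "nat \<Rightarrow> nat"
  assumes "S > 0" and "I \<ge> 1"
    and decreasing: "\<forall>i\<in>{1..I}. \<forall>j\<in>{1..I}. i < j \<longrightarrow> \<theta> i > \<theta> j"
    and pos: "\<forall>i\<in>{1..I}. \<theta> i > 0"
  defines "K \<equiv> K_cp I S N \<theta>"
  shows "\<forall>i\<in>{1..K}. cp_level S N \<theta> K < sqrt (\<theta> i)"
    and "\<forall>i\<in>{K<..I}. sqrt (\<theta> i) \<le> cp_level S N \<theta> K"
proof -
  have K: "1 \<le> K" "K \<le> I" "(cp_level S N \<theta> K)\<^sup>2 < \<theta> K"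
    using K_cp_mem[OF assms(1,2)] assms(2) pos by (auto simp: K_def cp_lambda_eq_cp_level_sq)
  show "\<forall>i\<in>{1..K}. cp_level S N \<theta> K < sqrt (\<theta> i)"
  proof
    fix i assume "i \<in> {1..K}"
    then have "\<theta> K \<le> \<theta> i" using decreasing K by (cases "i = K") (auto intro: less_imp_le)
    then show "cp_level S N \<theta> K < sqrt (\<theta> i)" using K(3) by (intro real_less_rsqrt) simp
  qed
  show "\<forall>i\<in>{K<..I}. sqrt (\<theta> i) \<le> cp_level S N \<theta> K"
  proof
    fix i assume i: "i \<in> {K<..I}"
    then have "sqrt (\<theta> (Suc K)) \<le> cp_level S N \<theta> K"
      using assms(1) pos K_cp_maximal[of I S N \<theta> "Suc K"] unfolding K_def
      by (intro sqrt_le_cp_level_if_cp_lambda_Suc_ge) (auto simp: less_imp_le)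
    moreover have "\<theta> i \<le> \<theta> (Suc K)" using decreasing i K by (cases "i = Suc K") (auto intro: less_imp_le)
    ultimately show "sqrt (\<theta> i) \<le> cp_level S N \<theta> K" by (meson order.trans real_sqrt_le_mono)
  qed
qed

theorem theorem1:
  fixes I :: nat and S :: real and N :: "nat \<Rightarrow> nat" and \<theta> :: "nat \<Rightarrow> real"
  assumes "S > 0" and "I \<ge> 1"
    and "\<forall>i\<in>{1..I}. N i > 0"
    and "\<forall>i\<in>{1..I}. \<forall>j\<in>{1..I}. i < j \<longrightarrow> \<theta> i > \<theta> j"
    and "\<forall>i\<in>{1..I}. \<theta> i > 0"
  shows "let K = K_cp I S N \<theta>; lam = cp_lambda S N \<theta> K in
    cp_optimal I S N \<theta>
      (\<lambda>i. if i \<le> K then sqrt (\<theta> i * lam) else \<theta> i)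
      (\<lambda>i. if i \<le> K then sqrt (\<theta> i / lam) - 1 else 0)
      N"
proof -
  define K where "K = K_cp I S N \<theta>"
  define m where "m = cp_level S N \<theta> K"
  have "1 \<le> K" "K \<le> I"
    using K_cp_mem[OF assms(1,2), of \<theta> N] assms(2,5) by (auto simp: K_def)
  then have "m > 0" unfolding m_def using assms(1,3,5) by (intro cp_level_pos) (auto simp: less_imp_le)
  note high = K_cp_separates(1)[where N = N, OF assms(1,2,4,5), folded K_def m_def]
  note low = K_cp_separates(2)[where N = N, OF assms(1,2,4,5), folded K_def m_def]
  have budget: "(\<Sum>i=1..K. real (N i) * (sqrt (\<theta> i) / m - 1)) = S"
    using cp_level_budget[OF assms(1)] \<open>m > 0\<close> unfolding m_def by blast
  have "cp_lambda S N \<theta> K = m\<^sup>2" by (simp add: m_def cp_lambda_eq_cp_level_sq)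
  then have price: "sqrt (\<theta> i * cp_lambda S N \<theta> K) = sqrt (\<theta> i) * m"
      and demand: "sqrt (\<theta> i / cp_lambda S N \<theta> K) = sqrt (\<theta> i) / m" for i
    using \<open>m > 0\<close> by (simp_all add: real_sqrt_mult real_sqrt_divide)
  show ?thesis
    unfolding Let_def K_def[symmetric] price demand
    by (rule cp_optimal_threshold_prices[OF \<open>m > 0\<close> \<open>K \<le> I\<close> high low assms(5) budget])
qed

end
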